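(* Let $f:[-1,1]\to\mathbb R^+$ be monotone and continuous, with $\varphi(x,y)=f(\langle x,y\rangle)$ a Markov kernel satisfying $\lambda(\varphi)>0$ and $|\lambda_i|\le\lambda(\varphi)$ for all $i\ge1$. Let $y\in\mathbb{S}^{d-1}$ and $\mu=f(\langle\cdot,y\rangle)\,d\sigma$. Then for any $w\in\mathbb{S}^{d-1}$, $\mu\in\mathrm{DPS}_w(2p_w)$, where $p_w=\min(\mu(H_w^+),\mu(H_w^-))$.
   Context: $\sigma$ is the uniform probability measure on $\mathbb{S}^{d-1}$; Markov kernel means $\int\varphi(x,y)\,d\sigma(y)=1$ for all $x$. $\lambda_i$ is the eigenvalue of $g\mapsto\int\varphi(\cdot,y)g(y)\,d\sigma(y)$ on the $i$-th spherical harmonic $\psi_i$ ($\psi_0\equiv1$, $\psi_1,\dots,\psi_d$ linear), $\lambda(\varphi):=\lambda_1=\dots=\lambda_d$. $H_w^+=\{x\in\mathbb{S}^{d-1}:\langle x,w\rangle\ge0\}$, $H_w^-=\{x:\langle x,w\rangle<0\}$. For $R=\mathrm I_d-2ww^T$, a probability measure $\mu$ is in $\mathrm{DPS}_w(\varepsilon)$ if $\mu=(1-\varepsilon)\mu_w+\varepsilon\mu_w^s$ for probability measures $\mu_w,\mu_w^s$ with $R_*\mu_w^s=\mu_w^s$. *)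

theory Defs
  imports "HOL-Analysis.Analysis" "HOL-Probability.Probability"
begin

text \<open>Uniform probability measure sigma on the unit sphere of 'a (dimension d = DIM('a)):
  push-forward of the normalised Lebesgue measure on the unit ball under x |-> x / |x|
  (the cone-measure description of normalised surface measure).\<close>
definition sphere_unif :: "'a::euclidean_space measure" where
  "sphere_unif = distr (uniform_measure lborel (ball 0 1)) borel (\<lambda>x. sgn x)"

definition kernel_op :: "(real \<Rightarrow> real) \<Rightarrow> ('a::euclidean_space \<Rightarrow> real) \<Rightarrow> 'a \<Rightarrow> real" where
  "kernel_op f g x = (\<integral>y. f (x \<bullet> y) * g y \<partial>sphere_unif)"

definition markov_zonal :: "'a::euclidean_space itself \<Rightarrow> (real \<Rightarrow> real) \<Rightarrow> bool" where
  "markov_zonal _ f \<longleftrightarrow> (\<forall>x::'a \<in> sphere 0 1. (\<integral>y. f (x \<bullet> y) \<partial>(sphere_unif::'a measure)) = 1)"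

definition laplacian :: "('a::euclidean_space \<Rightarrow> real) \<Rightarrow> 'a \<Rightarrow> real" where
  "laplacian p x = (\<Sum>b\<in>Basis. deriv (deriv (\<lambda>t. p (x + t *\<^sub>R b))) 0)"

definition spherical_harmonic :: "nat \<Rightarrow> ('a::euclidean_space \<Rightarrow> real) \<Rightarrow> bool" where
  "spherical_harmonic k g \<longleftrightarrow>
     (\<exists>p::'a \<Rightarrow> real. polynomial_function p
        \<and> (\<forall>t x. p (t *\<^sub>R x) = t ^ k * p x)
        \<and> (\<forall>x. laplacian p x = 0)
        \<and> (\<forall>x\<in>sphere 0 1. g x = p x))"

definition reflect :: "'a::euclidean_space \<Rightarrow> 'a \<Rightarrow> 'a" where
  "reflect w x = x - (2 * (x \<bullet> w)) *\<^sub>R w"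

definition DPS :: "'a::euclidean_space \<Rightarrow> real \<Rightarrow> 'a measure \<Rightarrow> bool" where
  "DPS w \<epsilon> \<mu> \<longleftrightarrow>
     (\<exists>\<nu>1 \<nu>2. prob_space \<nu>1 \<and> prob_space \<nu>2
        \<and> sets \<nu>1 = sets borel \<and> sets \<nu>2 = sets borel
        \<and> emeasure \<nu>1 (sphere 0 1) = 1 \<and> emeasure \<nu>2 (sphere 0 1) = 1
        \<and> distr \<nu>2 borel (reflect w) = \<nu>2
        \<and> (\<forall>A\<in>sets borel. measure \<mu> A = (1 - \<epsilon>) * measure \<nu>1 A + \<epsilon> * measure \<nu>2 A))"

definition halfspace_pos :: "'a::euclidean_space \<Rightarrow> 'a set" where
  "halfspace_pos w = {x \<in> sphere 0 1. x \<bullet> w \<ge> 0}"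

definition halfspace_neg :: "'a::euclidean_space \<Rightarrow> 'a set" where
  "halfspace_neg w = {x \<in> sphere 0 1. x \<bullet> w < 0}"

end

theory Submission
  imports Defs
begin

(* Write mu = g sigma with g x = f <x, y>, and let R be the reflection in the hyperplane orthogonal
   to w. Since <R x, y> - <x, y> = -2 <x, w> <w, y>, the monotonicity of f gives g <= g o R on one
   of the two open half-spheres, say on {<x, w> < 0} after possibly replacing w by -w. As sigma is
   R-invariant and the equator is sigma-null, the R-symmetric function min g (g o R) then has
   integral 2 mu(H_w^-) <= 1, so that mu(H_w^-) = p_w. Normalising min g (g o R) and
   g - min g (g o R) gives mu_w^s and mu_w with epsilon = 2 p_w. *)

section \<open>Orthogonal invariance of Lebesgue and spherical measure\<close>

lemma open_ae_disjoint_balls: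
  fixes G :: "'a::euclidean_space set"
  assumes "open G"
  obtains C :: "('a \<times> real) set"
  where "countable C" "\<forall>i\<in>C. snd i > 0" "(\<Union>i\<in>C. ball (fst i) (snd i)) \<subseteq> G"
    "disjoint_family_on (\<lambda>i. ball (fst i) (snd i)) C"
    "negligible (G - (\<Union>i\<in>C. ball (fst i) (snd i)))"
proof -
  let ?K = "{(c, r). 0 < r \<and> ball c r \<subseteq> G}"
  have "\<exists>i. i \<in> ?K \<and> x \<in> ball (fst i) (snd i) \<and> snd i < d" if "x \<in> G" "0 < d" for x d
  proof -
    obtain e where "e > 0" "ball x e \<subseteq> G" using assms \<open>x \<in> G\<close> open_contains_ball by blast
    with \<open>0 < d\<close> show ?thesis by (intro exI[of _ "(x, min e (d/2))"]) auto
  qed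
  then obtain C where "countable C" "C \<subseteq> ?K"
     "pairwise (\<lambda>i j. disjnt (ball (fst i) (snd i)) (ball (fst j) (snd j))) C"
     "negligible (G - (\<Union>i\<in>C. ball (fst i) (snd i)))"
    using Vitali_covering_theorem_balls[of G ?K fst snd] by blast
  then show ?thesis
    by (intro that) (force simp: disjoint_family_on_def pairwise_def disjnt_def)+
qed

(* Up to a null set, G is a disjoint union of balls (Vitali), and T maps balls to balls of the
   same radius. *)
lemma emeasure_lebesgue_orthogonal_image_open:
  fixes T :: "'a::euclidean_space \<Rightarrow> 'a"
  assumes T: "orthogonal_transformation T" and "open G"
  shows "emeasure lebesgue (T ` G) = emeasure lebesgue G"
proof -
  obtain C :: "('a \<times> real) set" where C: "countable C" "\<forall>i\<in>C. snd i > 0"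
    "(\<Union>i\<in>C. ball (fst i) (snd i)) \<subseteq> G" "disjoint_family_on (\<lambda>i. ball (fst i) (snd i)) C"
    "negligible (G - (\<Union>i\<in>C. ball (fst i) (snd i)))"
    using open_ae_disjoint_balls[OF \<open>open G\<close>] by blast
  define U where "U = (\<Union>i\<in>C. ball (fst i) (snd i))"
  have "open U" by (auto simp: U_def)
  have G_eq: "U \<union> (G - U) = G" using C(3) by (auto simp: U_def)
  have TU: "T ` U = (\<Union>i\<in>C. ball (T (fst i)) (snd i))"
    by (simp add: U_def image_UN image_orthogonal_transformation_ball[OF T])
  have "negligible (T ` (G - U))"
    using C(5) orthogonal_transformation_linear[OF T]
    by (auto simp: U_def intro: negligible_differentiable_image_negligible linear_imp_differentiable_on)
  then have null: "G - U \<in> null_sets lebesgue" "T ` (G - U) \<in> null_sets lebesgue"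
    using C(5) by (simp_all add: U_def negligible_iff_null_sets)
  have disj_T: "disjoint_family_on (\<lambda>i. ball (T (fst i)) (snd i)) C"
    using C(4) orthogonal_transformation_inj[OF T]
    unfolding disjoint_family_on_def image_orthogonal_transformation_ball[OF T, symmetric]
    by (metis image_Int image_empty)
  have "open (T ` U)" unfolding TU by auto
  have "emeasure lebesgue (T ` G) = emeasure lebesgue (T ` U)"
    using emeasure_Un_null_set[of "T ` U" lebesgue "T ` (G - U)"] \<open>open (T ` U)\<close> null G_eq
    by (auto simp flip: image_Un)
  also have "\<dots> = (\<integral>\<^sup>+i. emeasure lebesgue (ball (T (fst i)) (snd i)) \<partial>count_space C)"
    unfolding TU by (rule emeasure_UN_countable) (use C(1) disj_T in auto)
  also have "\<dots> = (\<integral>\<^sup>+i. emeasure lebesgue (ball (fst i) (snd i)) \<partial>count_space C)"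
    by (intro nn_integral_cong) (use C(2) in \<open>auto simp: emeasure_ball less_imp_le\<close>)
  also have "\<dots> = emeasure lebesgue U"
    unfolding U_def by (rule emeasure_UN_countable[symmetric]) (use C(1,4) in auto)
  also have "\<dots> = emeasure lebesgue G"
    using emeasure_Un_null_set[of U lebesgue "G - U"] \<open>open U\<close> null G_eq by auto
  finally show ?thesis .
qed

lemma borel_measurable_orthogonal_transformation:
  fixes T :: "'a::euclidean_space \<Rightarrow> 'a"
  assumes "orthogonal_transformation T"
  shows "T \<in> borel_measurable borel"
proof -
  have "bounded_linear T"
    using orthogonal_transformation_linear[OF assms] by (simp add: linear_conv_bounded_linear)
  then show ?thesis by (intro borel_measurable_continuous_onI linear_continuous_on)
qed

lemma distr_lborel_orthogonal:
  fixes T :: "'a::euclidean_space \<Rightarrow> 'a"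
  assumes T: "orthogonal_transformation T"
  shows "distr lborel borel T = lborel"
proof (rule sym, rule measure_eqI_generator_eq[where E="{S. open S}" and \<Omega>=UNIV and A="\<lambda>n. ball 0 (real n)"])
  fix X :: "'a set" assume "X \<in> {S. open S}"
  then have "open X" by simp
  have "open (T -` X)"
    using \<open>open X\<close> orthogonal_transformation_linear[OF T]
    by (auto intro!: continuous_open_vimage linear_continuous_at simp: linear_conv_bounded_linear)
  have "T -` X = inv T ` X"
    using orthogonal_transformation_bij[OF T] by (simp add: bij_vimage_eq_inv_image)
  have "emeasure lborel X = emeasure lebesgue (inv T ` X)"
    using emeasure_lebesgue_orthogonal_image_open[OF orthogonal_transformation_inv[OF T] \<open>open X\<close>]
      \<open>open X\<close> by simp
  also have "\<dots> = emeasure lborel (T -` X)"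
    using \<open>open (T -` X)\<close> \<open>T -` X = inv T ` X\<close> by simp
  also have "\<dots> = emeasure (distr lborel borel T) X"
    using \<open>open X\<close> borel_measurable_orthogonal_transformation[OF T] by (simp add: emeasure_distr)
  finally show "emeasure lborel X = emeasure (distr lborel borel T) X" .
next
  show "emeasure lborel (ball (0::'a) (real n)) \<noteq> \<infinity>" for n :: nat
    using emeasure_lborel_ball_finite[of "0::'a" "real n"] by simp
qed (auto simp: Int_stable_def sets_borel reals_Archimedean2)

lemma distr_uniform_measure_lborel_orthogonal:
  fixes T :: "'a::euclidean_space \<Rightarrow> 'a"
  assumes T: "orthogonal_transformation T" and S: "S \<in> sets borel" "T -` S = S"
  shows "distr (uniform_measure lborel S) borel T = uniform_measure lborel S"
proof (rule measure_eqI)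
  note T_meas = borel_measurable_orthogonal_transformation[OF T]
  fix A :: "'a set" assume "A \<in> sets (distr (uniform_measure lborel S) borel T)"
  then have A: "A \<in> sets borel" by simp
  then have "T -` A \<in> sets borel" using T_meas by (simp add: measurable_sets_borel)
  have "S \<inter> T -` A = T -` (S \<inter> A)" using S(2) by auto
  then have "emeasure lborel (S \<inter> T -` A) = emeasure (distr lborel borel T) (S \<inter> A)"
    using S A T_meas by (simp add: emeasure_distr)
  also have "\<dots> = emeasure lborel (S \<inter> A)"
    by (simp add: distr_lborel_orthogonal[OF T])
  finally show "emeasure (distr (uniform_measure lborel S) borel T) A = emeasure (uniform_measure lborel S) A"
    using S A T_meas \<open>T -` A \<in> sets borel\<close> by (simp add: emeasure_distr)
qed simp

lemma sets_sphere_unif [simp]: "sets sphere_unif = sets borel"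
  by (simp add: sphere_unif_def)

lemma measurable_sphere_unif_iff [simp]:
  fixes h :: "'a::euclidean_space \<Rightarrow> 'b::topological_space"
  shows "h \<in> borel_measurable sphere_unif \<longleftrightarrow> h \<in> borel_measurable borel"
proof -
  have "measurable (sphere_unif::'a measure) (borel::'b measure) = measurable borel borel"
    by (rule measurable_cong_sets) simp_all
  then show ?thesis by simp
qed

lemma prob_space_uniform_ball:
  "prob_space (uniform_measure lborel (ball (0::'a::euclidean_space) 1))"
proof (rule prob_space_uniform_measure)
  have "unit_ball_vol (real DIM('a)) \<noteq> 0"
    using unit_ball_vol_pos[of "real DIM('a)"] by linarith
  then show "emeasure lborel (ball (0::'a) 1) \<noteq> 0" by (simp add: emeasure_ball)
qed (simp_all add: emeasure_ball)

lemma prob_space_sphere_unif: "prob_space sphere_unif"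
  unfolding sphere_unif_def
  by (rule prob_space.prob_space_distr[OF prob_space_uniform_ball]) simp

lemma AE_sphere_unif_sphere: "AE x in sphere_unif. x \<in> sphere (0::'a::euclidean_space) 1"
  unfolding sphere_unif_def
proof (subst AE_distr_iff)
  show "AE x in uniform_measure lborel (ball (0::'a) 1). sgn x \<in> sphere 0 1"
    by (rule AE_uniform_measureI)
       (use AE_lborel_singleton[of "0::'a"] in \<open>auto simp: norm_sgn elim!: eventually_mono\<close>)
qed auto

lemma AE_sphere_unif_not_orthogonal:
  fixes w :: "'a::euclidean_space"
  assumes "w \<noteq> 0"
  shows "AE x in sphere_unif. x \<bullet> w \<noteq> 0"
proof -
  let ?Z = "{x::'a. x \<bullet> w = 0}"
  have "negligible ?Z"
    using negligible_hyperplane[of w 0] assms by (simp add: inner_commute)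
  then have "emeasure lborel ?Z = 0"
    by (simp add: negligible_iff_null_sets null_sets_def)
  moreover have "emeasure lborel (ball 0 1 \<inter> ?Z) \<le> emeasure lborel ?Z"
    by (rule emeasure_mono) auto
  moreover have "sgn -` ?Z = ?Z" by (auto simp: sgn_div_norm)
  ultimately have "?Z \<in> null_sets sphere_unif"
    by (simp add: sphere_unif_def emeasure_distr null_sets_def)
  then show ?thesis
    by (auto intro: AE_not_in[THEN eventually_mono])
qed

lemma distr_sphere_unif_orthogonal:
  fixes T :: "'a::euclidean_space \<Rightarrow> 'a"
  assumes T: "orthogonal_transformation T"
  shows "distr sphere_unif borel T = sphere_unif"
proof -
  let ?U = "uniform_measure lborel (ball (0::'a) 1)"
  note T_meas [measurable] = borel_measurable_orthogonal_transformation[OF T]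
  have "distr (distr ?U borel sgn) borel T = distr ?U borel (T \<circ> sgn)"
    by (subst distr_distr) auto
  also have "T \<circ> sgn = sgn \<circ> T"
    using orthogonal_transformation_linear[OF T]
    by (auto simp: sgn_div_norm orthogonal_transformation_norm[OF T] linear_scale)
  also have "distr ?U borel (sgn \<circ> T) = distr (distr ?U borel T) borel sgn"
    by (subst distr_distr) auto
  also have "distr ?U borel T = ?U"
    by (rule distr_uniform_measure_lborel_orthogonal[OF T])
       (auto simp: orthogonal_transformation_norm[OF T])
  finally show ?thesis unfolding sphere_unif_def .
qed

lemma integral_sphere_unif_orthogonal:
  fixes T :: "'a::euclidean_space \<Rightarrow> 'a" and h :: "'a \<Rightarrow> 'b::{banach, second_countable_topology}"
  assumes T: "orthogonal_transformation T" and h: "h \<in> borel_measurable borel"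
  shows "(\<integral>x. h (T x) \<partial>sphere_unif) = (\<integral>x. h x \<partial>sphere_unif)"
proof -
  have "(\<integral>x. h (T x) \<partial>sphere_unif) = (\<integral>x. h x \<partial>distr sphere_unif borel T)"
    using h borel_measurable_orthogonal_transformation[OF T] by (simp add: integral_distr)
  then show ?thesis by (simp add: distr_sphere_unif_orthogonal[OF T])
qed

lemma integrable_sphere_unif_orthogonal:
  fixes T :: "'a::euclidean_space \<Rightarrow> 'a" and h :: "'a \<Rightarrow> 'b::{banach, second_countable_topology}"
  assumes T: "orthogonal_transformation T" and h: "integrable sphere_unif h"
  shows "integrable sphere_unif (\<lambda>x. h (T x))"
proof -
  have meas: "T \<in> measurable sphere_unif borel"
    using borel_measurable_orthogonal_transformation[OF T] by simp
  have "integrable (distr sphere_unif borel T) h"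
    unfolding distr_sphere_unif_orthogonal[OF T] by (rule h)
  with meas show ?thesis by (rule integrable_distr)
qed

section \<open>Normalised densities\<close>

lemma measure_density_eq_integral:
  fixes g :: "'a \<Rightarrow> real"
  assumes g: "integrable M g" "AE x in M. 0 \<le> g x" and A: "A \<in> sets M"
  shows "measure (density M (\<lambda>x. ennreal (g x))) A = (\<integral>x. indicator A x * g x \<partial>M)"
proof -
  have "emeasure (density M (\<lambda>x. ennreal (g x))) A = (\<integral>\<^sup>+x. ennreal (g x) * indicator A x \<partial>M)"
    using g A by (simp add: emeasure_density borel_measurable_integrable)
  also have "\<dots> = (\<integral>\<^sup>+x. ennreal (indicator A x * g x) \<partial>M)"
    by (intro nn_integral_cong) (simp split: split_indicator)
  also have "\<dots> = ennreal (\<integral>x. indicator A x * g x \<partial>M)"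
    using g A integrable_mult_indicator[OF A g(1)]
    by (intro nn_integral_eq_integral) (auto split: split_indicator elim!: eventually_mono)
  moreover have "0 \<le> (\<integral>x. indicator A x * g x \<partial>M)"
    using g(2) by (intro integral_nonneg_AE) (auto split: split_indicator elim!: eventually_mono)
  ultimately show ?thesis by (simp add: measure_def)
qed

lemma measure_density_cong_AE:
  fixes g :: "'a \<Rightarrow> real"
  assumes g: "integrable M g" "AE x in M. 0 \<le> g x"
    and sets: "A \<in> sets M" "B \<in> sets M" and AE: "AE x in M. x \<in> A \<longleftrightarrow> x \<in> B"
  shows "measure (density M (\<lambda>x. ennreal (g x))) A = measure (density M (\<lambda>x. ennreal (g x))) B"
proof -
  have "(\<lambda>x. indicator S x * g x) \<in> borel_measurable M" if "S \<in> sets M" for S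
    using borel_measurable_integrable[OF integrable_mult_indicator[OF that g(1)]] by simp
  then have "(\<integral>x. indicator A x * g x \<partial>M) = (\<integral>x. indicator B x * g x \<partial>M)"
    using sets AE by (intro integral_cong_AE) (auto split: split_indicator elim!: eventually_mono)
  then show ?thesis
    using g sets by (simp add: measure_density_eq_integral)
qed

(* If h has integral 0, M itself stands in for the (then irrelevant) normalisation. *)
definition normalized_density :: "'a measure \<Rightarrow> ('a \<Rightarrow> real) \<Rightarrow> 'a measure" where
  "normalized_density M h =
     (let c = (\<integral>x. h x \<partial>M) in if c = 0 then M else density M (\<lambda>x. ennreal (h x / c)))"

lemma sets_normalized_density [simp]: "sets (normalized_density M h) = sets M"
  by (simp add: normalized_density_def Let_def)

lemma
  fixes h :: "'a \<Rightarrow> real"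
  assumes M: "prob_space M" and h: "integrable M h" "AE x in M. 0 \<le> h x"
  shows prob_space_normalized_density: "prob_space (normalized_density M h)"
    and integral_indicator_normalized_density:
      "A \<in> sets M \<Longrightarrow> (\<integral>x. indicator A x * h x \<partial>M) = (\<integral>x. h x \<partial>M) * measure (normalized_density M h) A"
proof -
  let ?c = "\<integral>x. h x \<partial>M"
  have "0 \<le> ?c" using h(2) by (rule integral_nonneg_AE)
  then have h_div: "integrable M (\<lambda>x. h x / ?c)" "AE x in M. 0 \<le> h x / ?c"
    using h by (auto elim!: eventually_mono)
  have measure_eq: "measure (normalized_density M h) A = (\<integral>x. indicator A x * h x \<partial>M) / ?c"
    if "?c \<noteq> 0" "A \<in> sets M" for A
    using that measure_density_eq_integral[OF h_div that(2)]
    by (simp add: normalized_density_def)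
  show "prob_space (normalized_density M h)"
  proof (cases "?c = 0")
    case False
    have "emeasure (density M (\<lambda>x. ennreal (h x / ?c))) (space M) = (\<integral>\<^sup>+x. ennreal (h x / ?c) \<partial>M)"
      using h_div by (subst emeasure_density) (auto intro!: nn_integral_cong simp: borel_measurable_integrable)
    also have "\<dots> = ennreal (\<integral>x. h x / ?c \<partial>M)"
      by (rule nn_integral_eq_integral[OF h_div])
    finally show ?thesis
      using False by (intro prob_spaceI) (simp add: normalized_density_def)
  qed (simp add: normalized_density_def M)
  show "(\<integral>x. indicator A x * h x \<partial>M) = ?c * measure (normalized_density M h) A" if A: "A \<in> sets M"
  proof (cases "?c = 0")
    case True
    have "0 \<le> (\<integral>x. indicator A x * h x \<partial>M)"
      using h by (intro integral_nonneg_AE) (auto elim!: eventually_mono)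
    moreover have "(\<integral>x. indicator A x * h x \<partial>M) \<le> ?c"
      using h integrable_mult_indicator[OF A h(1)]
      by (intro integral_mono_AE) (auto split: split_indicator elim!: eventually_mono)
    ultimately show ?thesis using True by simp
  qed (simp add: measure_eq[OF _ A])
qed

lemma AE_normalized_density:
  assumes "integrable M h" "AE x in M. P x"
  shows "AE x in normalized_density M h. P x"
proof (cases "(\<integral>x. h x \<partial>M) = 0")
  case False
  have [measurable]: "h \<in> borel_measurable M" using assms(1) by (rule borel_measurable_integrable)
  have meas: "(\<lambda>x. ennreal (h x / (\<integral>x. h x \<partial>M))) \<in> borel_measurable M" by measurable
  have eq: "normalized_density M h = density M (\<lambda>x. ennreal (h x / (\<integral>x. h x \<partial>M)))"
    using False by (simp add: normalized_density_def)
  show ?thesis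
    unfolding eq AE_density[OF meas] using assms(2) by (auto elim: eventually_mono)
next
  case True
  then have "normalized_density M h = M" by (simp add: normalized_density_def)
  with assms(2) show ?thesis by metis
qed

lemma distr_normalized_density:
  fixes h :: "'a::topological_space \<Rightarrow> real"
  assumes sets_M: "sets M = sets borel" and T: "T \<in> borel_measurable borel"
    and M_inv: "distr M borel T = M"
    and h: "h \<in> borel_measurable borel" and h_inv: "\<And>x. h (T x) = h x"
  shows "distr (normalized_density M h) borel T = normalized_density M h"
proof (cases "(\<integral>x. h x \<partial>M) = 0")
  case False
  let ?f = "\<lambda>x. ennreal (h x / (\<integral>x. h x \<partial>M))"
  have "T \<in> measurable M borel" by (simp add: measurable_cong_sets[OF sets_M refl] T)
  then have "density (distr M borel T) ?f = distr (density M (\<lambda>x. ?f (T x))) borel T"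
    using h by (intro density_distr) auto
  then show ?thesis
    using False by (simp add: normalized_density_def M_inv h_inv)
qed (simp add: normalized_density_def M_inv)

section \<open>Reflection-dominated densities\<close>

lemma orthogonal_transformation_reflect:
  assumes "norm w = 1"
  shows "orthogonal_transformation (reflect w)"
proof -
  have "linear (reflect w)"
    unfolding reflect_def by (intro linearI) (auto simp: algebra_simps inner_add_left)
  moreover have "reflect w x \<bullet> reflect w z = x \<bullet> z" for x z
    using assms unfolding reflect_def
    by (simp add: inner_diff_left inner_diff_right algebra_simps dot_square_norm power2_eq_square inner_commute)
  ultimately show ?thesis by (simp add: orthogonal_transformation_def)
qed

lemma reflect_reflect: "norm w = 1 \<Longrightarrow> reflect w (reflect w x) = x"
  unfolding reflect_def by (simp add: inner_diff_left algebra_simps dot_square_norm power2_eq_square)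

lemma inner_reflect_self: "norm w = 1 \<Longrightarrow> reflect w x \<bullet> w = - (x \<bullet> w)"
  unfolding reflect_def by (simp add: inner_diff_left dot_square_norm)

lemma reflect_uminus [simp]: "reflect (- w) = reflect w"
  by (rule ext) (simp add: reflect_def)

lemma DPS_uminus [simp]: "DPS (- w) \<epsilon> \<mu> \<longleftrightarrow> DPS w \<epsilon> \<mu>"
  by (simp add: DPS_def)

lemma sets_halfspace [measurable]:
  "halfspace_pos w \<in> sets borel" "halfspace_neg w \<in> sets borel"
  unfolding halfspace_pos_def halfspace_neg_def by measurable

lemma DPS_density_sum:
  fixes g1 g2 :: "'a::euclidean_space \<Rightarrow> real"
  assumes w: "norm w = 1"
    and g1: "integrable sphere_unif g1" "AE x in sphere_unif. 0 \<le> g1 x"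
    and g2: "integrable sphere_unif g2" "AE x in sphere_unif. 0 \<le> g2 x"
    and g2_sym: "\<And>x. g2 (reflect w x) = g2 x"
    and total: "(\<integral>x. g1 x \<partial>sphere_unif) + (\<integral>x. g2 x \<partial>sphere_unif) = 1"
  shows "DPS w (\<integral>x. g2 x \<partial>sphere_unif) (density sphere_unif (\<lambda>x. ennreal (g1 x + g2 x)))"
  unfolding DPS_def
proof (intro exI conjI ballI)
  let ?\<nu>1 = "normalized_density sphere_unif g1" and ?\<nu>2 = "normalized_density sphere_unif g2"
  note prob = prob_space_sphere_unif
  show "prob_space ?\<nu>1" "prob_space ?\<nu>2"
    by (rule prob_space_normalized_density[OF prob g1] prob_space_normalized_density[OF prob g2])+
  show "sets ?\<nu>1 = sets borel" "sets ?\<nu>2 = sets borel" by simp_all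
  show "emeasure ?\<nu>1 (sphere 0 1) = 1"
    using AE_normalized_density[OF g1(1) AE_sphere_unif_sphere]
    by (intro prob_space.emeasure_eq_1_AE[OF prob_space_normalized_density[OF prob g1]]) simp_all
  show "emeasure ?\<nu>2 (sphere 0 1) = 1"
    using AE_normalized_density[OF g2(1) AE_sphere_unif_sphere]
    by (intro prob_space.emeasure_eq_1_AE[OF prob_space_normalized_density[OF prob g2]]) simp_all
  show "distr ?\<nu>2 borel (reflect w) = ?\<nu>2"
    using g2_sym borel_measurable_integrable[OF g2(1)]
    by (intro distr_normalized_density borel_measurable_orthogonal_transformation
        orthogonal_transformation_reflect distr_sphere_unif_orthogonal w) auto
  fix A :: "'a set" assume "A \<in> sets borel"
  then have A: "A \<in> sets sphere_unif" by simp
  have "AE x in sphere_unif. 0 \<le> g1 x + g2 x"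
    using g1(2) g2(2) by eventually_elim simp
  then have "measure (density sphere_unif (\<lambda>x. ennreal (g1 x + g2 x))) A
      = (\<integral>x. indicator A x * g1 x + indicator A x * g2 x \<partial>sphere_unif)"
    using g1(1) g2(1) A by (subst measure_density_eq_integral) (auto simp: algebra_simps)
  also have "\<dots> = (\<integral>x. indicator A x * g1 x \<partial>sphere_unif) + (\<integral>x. indicator A x * g2 x \<partial>sphere_unif)"
    using integrable_mult_indicator[OF A g1(1)] integrable_mult_indicator[OF A g2(1)] by simp
  also have "\<dots> = (1 - (\<integral>x. g2 x \<partial>sphere_unif)) * measure ?\<nu>1 A
      + (\<integral>x. g2 x \<partial>sphere_unif) * measure ?\<nu>2 A"
    using total integral_indicator_normalized_density[OF prob g1 A]
      integral_indicator_normalized_density[OF prob g2 A] by simp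
  finally show "measure (density sphere_unif (\<lambda>x. ennreal (g1 x + g2 x))) A
      = (1 - (\<integral>x. g2 x \<partial>sphere_unif)) * measure ?\<nu>1 A + (\<integral>x. g2 x \<partial>sphere_unif) * measure ?\<nu>2 A" .
qed

lemma measure_density_halfspaces:
  fixes g :: "'a::euclidean_space \<Rightarrow> real"
  assumes g: "integrable sphere_unif g" "AE x in sphere_unif. 0 \<le> g x"
    and total: "(\<integral>x. g x \<partial>sphere_unif) = 1"
  shows "measure (density sphere_unif (\<lambda>x. ennreal (g x))) (halfspace_pos w)
       + measure (density sphere_unif (\<lambda>x. ennreal (g x))) (halfspace_neg w) = 1"
proof -
  let ?\<mu> = "density sphere_unif (\<lambda>x. ennreal (g x))"
  have \<mu>_eq: "measure ?\<mu> A = (\<integral>x. indicator A x * g x \<partial>sphere_unif)" if "A \<in> sets borel" for A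
    using measure_density_eq_integral[OF g] that by simp
  have int: "integrable sphere_unif (\<lambda>x. indicator A x * g x)" if "A \<in> sets borel" for A
    using integrable_mult_indicator[OF _ g(1), of A] that by simp
  have "measure ?\<mu> (halfspace_pos w) + measure ?\<mu> (halfspace_neg w)
       = (\<integral>x. indicator (halfspace_pos w) x * g x + indicator (halfspace_neg w) x * g x \<partial>sphere_unif)"
    unfolding \<mu>_eq[OF sets_halfspace(1)] \<mu>_eq[OF sets_halfspace(2)]
    by (intro Bochner_Integration.integral_add[symmetric] int sets_halfspace)
  also have "\<dots> = (\<integral>x. indicator (sphere 0 1) x * g x \<partial>sphere_unif)"
    by (intro Bochner_Integration.integral_cong)
       (auto simp: halfspace_pos_def halfspace_neg_def split: split_indicator)
  also have "\<dots> = measure ?\<mu> UNIV"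
    using measure_density_cong_AE[OF g, of "sphere 0 1" UNIV] AE_sphere_unif_sphere
    by (simp add: \<mu>_eq)
  also have "\<dots> = 1"
    using total by (simp add: \<mu>_eq)
  finally show ?thesis .
qed

lemma measure_density_halfspace_uminus:
  fixes g :: "'a::euclidean_space \<Rightarrow> real" and w :: 'a
  assumes "w \<noteq> 0" and g: "integrable sphere_unif g" "AE x in sphere_unif. 0 \<le> g x"
  shows "measure (density sphere_unif (\<lambda>x. ennreal (g x))) (halfspace_pos (- w))
       = measure (density sphere_unif (\<lambda>x. ennreal (g x))) (halfspace_neg w)"
    and "measure (density sphere_unif (\<lambda>x. ennreal (g x))) (halfspace_neg (- w))
       = measure (density sphere_unif (\<lambda>x. ennreal (g x))) (halfspace_pos w)"
proof -
  note off_hyperplane = AE_sphere_unif_not_orthogonal[OF \<open>w \<noteq> 0\<close>]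
  show "measure (density sphere_unif (\<lambda>x. ennreal (g x))) (halfspace_pos (- w))
      = measure (density sphere_unif (\<lambda>x. ennreal (g x))) (halfspace_neg w)"
    by (rule measure_density_cong_AE[OF g], simp_all)
       (rule eventually_mono[OF off_hyperplane], auto simp: halfspace_pos_def halfspace_neg_def)
  show "measure (density sphere_unif (\<lambda>x. ennreal (g x))) (halfspace_neg (- w))
      = measure (density sphere_unif (\<lambda>x. ennreal (g x))) (halfspace_pos w)"
    by (rule measure_density_cong_AE[OF g], simp_all)
       (rule eventually_mono[OF off_hyperplane], auto simp: halfspace_pos_def halfspace_neg_def)
qed

lemma integral_min_reflect:
  fixes g :: "'a::euclidean_space \<Rightarrow> real"
  assumes w: "norm w = 1" and g: "integrable sphere_unif g" "\<And>x. 0 \<le> g x"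
    and dom: "\<And>x. x \<bullet> w < 0 \<Longrightarrow> g x \<le> g (reflect w x)"
  shows "(\<integral>x. min (g x) (g (reflect w x)) \<partial>sphere_unif)
       = 2 * measure (density sphere_unif (\<lambda>x. ennreal (g x))) (halfspace_neg w)"
proof -
  let ?R = "reflect w" and ?N = "{x. x \<bullet> w < 0}"
  define k where "k x = indicator ?N x * g x" for x
  have R: "orthogonal_transformation ?R" by (rule orthogonal_transformation_reflect[OF w])
  have N: "?N \<in> sets sphere_unif" by simp
  have k: "integrable sphere_unif k"
    unfolding k_def using integrable_mult_indicator[OF N g(1)] by simp
  have kR: "integrable sphere_unif (\<lambda>x. k (?R x))"
    by (rule integrable_sphere_unif_orthogonal[OF R k])
  have min_split: "min (g x) (g (?R x)) = k x + k (?R x)" if "x \<bullet> w \<noteq> 0" for x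
  proof (cases "x \<bullet> w < 0")
    case True
    then show ?thesis
      using dom[OF True] by (simp add: k_def inner_reflect_self[OF w])
  next
    case False
    with that have "?R x \<bullet> w < 0" by (simp add: inner_reflect_self[OF w])
    with dom[OF this] False show ?thesis
      by (simp add: k_def inner_reflect_self[OF w] reflect_reflect[OF w])
  qed
  have "(\<integral>x. min (g x) (g (?R x)) \<partial>sphere_unif) = (\<integral>x. k x + k (?R x) \<partial>sphere_unif)"
  proof (rule integral_cong_AE)
    show "(\<lambda>x. min (g x) (g (?R x))) \<in> borel_measurable sphere_unif"
      using borel_measurable_integrable[OF integrable_min[OF g(1) integrable_sphere_unif_orthogonal[OF R g(1)]]] .
    show "(\<lambda>x. k x + k (?R x)) \<in> borel_measurable sphere_unif"
      using k kR by (intro borel_measurable_integrable) simp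
    have "w \<noteq> 0" using w by auto
    show "AE x in sphere_unif. min (g x) (g (?R x)) = k x + k (?R x)"
      using AE_sphere_unif_not_orthogonal[OF \<open>w \<noteq> 0\<close>] by (rule eventually_mono) (rule min_split)
  qed
  also have "\<dots> = 2 * (\<integral>x. k x \<partial>sphere_unif)"
    using k kR integral_sphere_unif_orthogonal[OF R, of k] borel_measurable_integrable[OF k] by simp
  also have "(\<integral>x. k x \<partial>sphere_unif) = measure (density sphere_unif (\<lambda>x. ennreal (g x))) ?N"
    using g by (simp add: measure_density_eq_integral k_def)
  also have "\<dots> = measure (density sphere_unif (\<lambda>x. ennreal (g x))) (halfspace_neg w)"
    using g AE_sphere_unif_sphere
    by (intro measure_density_cong_AE) (auto simp: halfspace_neg_def elim: eventually_mono)
  finally show ?thesis .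
qed

lemma DPS_density_reflection_dominated:
  fixes g :: "'a::euclidean_space \<Rightarrow> real"
  assumes w: "norm w = 1" and g_nonneg: "\<And>x. 0 \<le> g x"
    and total: "(\<integral>x. g x \<partial>sphere_unif) = 1"
    and dom: "\<And>x. x \<bullet> w < 0 \<Longrightarrow> g x \<le> g (reflect w x)"
  shows "DPS w (2 * min (measure (density sphere_unif (\<lambda>x. ennreal (g x))) (halfspace_pos w))
                         (measure (density sphere_unif (\<lambda>x. ennreal (g x))) (halfspace_neg w)))
             (density sphere_unif (\<lambda>x. ennreal (g x)))"
proof -
  let ?\<mu> = "density sphere_unif (\<lambda>x. ennreal (g x))"
  define gs where "gs x = min (g x) (g (reflect w x))" for x
  have g: "integrable sphere_unif g"
    using total not_integrable_integral_eq by fastforce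
  have gs: "integrable sphere_unif gs"
    unfolding gs_def
    by (intro integrable_min g integrable_sphere_unif_orthogonal[OF orthogonal_transformation_reflect[OF w]])
  have gs_le: "gs x \<le> g x" and gs_nonneg: "0 \<le> gs x" and gs_sym: "gs (reflect w x) = gs x" for x
    using g_nonneg by (auto simp: gs_def reflect_reflect[OF w])
  have mass: "(\<integral>x. gs x \<partial>sphere_unif) = 2 * measure ?\<mu> (halfspace_neg w)"
    unfolding gs_def by (rule integral_min_reflect[OF w g g_nonneg dom])
  have "DPS w (\<integral>x. gs x \<partial>sphere_unif) (density sphere_unif (\<lambda>x. ennreal (g x - gs x + gs x)))"
  proof (rule DPS_density_sum[OF w])
    show "(\<integral>x. g x - gs x \<partial>sphere_unif) + (\<integral>x. gs x \<partial>sphere_unif) = 1"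
      using g gs total by simp
  qed (use g gs gs_le gs_nonneg gs_sym in auto)
  moreover have "measure ?\<mu> (halfspace_neg w) \<le> measure ?\<mu> (halfspace_pos w)"
  proof -
    have "(\<integral>x. gs x \<partial>sphere_unif) \<le> (\<integral>x. g x \<partial>sphere_unif)"
      using g gs gs_le by (intro integral_mono) auto
    then show ?thesis
      using mass total measure_density_halfspaces[OF g _ total, of w] g_nonneg by simp
  qed
  ultimately show ?thesis
    using mass by (simp add: min_absorb2)
qed

lemma zonal_reflection_dominance:
  fixes F :: "real \<Rightarrow> real" and w y :: "'a::euclidean_space"
  assumes "mono F \<or> antimono F"
  obtains v where "v = w \<or> v = - w" "\<And>x. x \<bullet> v < 0 \<Longrightarrow> F (x \<bullet> y) \<le> F (reflect v x \<bullet> y)"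
proof -
  have dom: "F (x \<bullet> y) \<le> F (reflect v x \<bullet> y)"
    if "x \<bullet> v < 0" and "mono F \<and> 0 \<le> v \<bullet> y \<or> antimono F \<and> v \<bullet> y \<le> 0" for v x
  proof -
    have shift: "reflect v x \<bullet> y = x \<bullet> y - 2 * (x \<bullet> v) * (v \<bullet> y)"
      by (simp add: reflect_def inner_diff_left)
    from that(2) show ?thesis
    proof
      assume "mono F \<and> 0 \<le> v \<bullet> y"
      moreover have "x \<bullet> y \<le> reflect v x \<bullet> y"
        using calculation \<open>x \<bullet> v < 0\<close> by (simp add: shift mult_nonpos_nonneg)
      ultimately show ?thesis by (simp add: monoD)
    next
      assume "antimono F \<and> v \<bullet> y \<le> 0"
      moreover have "reflect v x \<bullet> y \<le> x \<bullet> y"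
        using calculation \<open>x \<bullet> v < 0\<close> by (simp add: shift mult_nonpos_nonpos)
      ultimately show ?thesis by (simp add: antimonoD)
    qed
  qed
  consider "mono F \<and> 0 \<le> w \<bullet> y \<or> antimono F \<and> w \<bullet> y \<le> 0"
    | "mono F \<and> 0 \<le> (- w) \<bullet> y \<or> antimono F \<and> (- w) \<bullet> y \<le> 0"
    using assms by (cases "0 \<le> w \<bullet> y") auto
  then show ?thesis
  proof cases
    case 1
    then show ?thesis using that[of w] dom by blast
  next
    case 2
    then show ?thesis using that[of "- w"] dom by blast
  qed
qed

lemma DPS_zonal_density:
  fixes F :: "real \<Rightarrow> real" and y w :: "'a::euclidean_space"
  assumes F: "\<And>t. 0 \<le> F t" "mono F \<or> antimono F"
    and total: "(\<integral>x. F (x \<bullet> y) \<partial>sphere_unif) = 1" and w: "norm w = 1"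
  shows "DPS w (2 * min (measure (density sphere_unif (\<lambda>x. ennreal (F (x \<bullet> y)))) (halfspace_pos w))
                         (measure (density sphere_unif (\<lambda>x. ennreal (F (x \<bullet> y)))) (halfspace_neg w)))
             (density sphere_unif (\<lambda>x. ennreal (F (x \<bullet> y))))"
proof -
  obtain v where v: "v = w \<or> v = - w" "\<And>x. x \<bullet> v < 0 \<Longrightarrow> F (x \<bullet> y) \<le> F (reflect v x \<bullet> y)"
    using zonal_reflection_dominance[OF F(2)] by blast
  have "norm v = 1" "w \<noteq> 0" using v(1) w by auto
  have "integrable sphere_unif (\<lambda>x. F (x \<bullet> y))"
    using total not_integrable_integral_eq by fastforce
  then show ?thesis
    using DPS_density_reflection_dominated[OF \<open>norm v = 1\<close> F(1) total v(2)] v(1) F(1)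
      measure_density_halfspace_uminus[OF \<open>w \<noteq> 0\<close>]
    by (auto simp: min.commute)
qed

lemma clamped_extension:
  fixes f :: "real \<Rightarrow> real"
  assumes pos: "\<forall>t\<in>{-1..1}. f t > 0" and mono: "mono_on {-1..1} f \<or> antimono_on {-1..1} f"
    and cont: "continuous_on {-1..1} f"
  obtains F where "\<And>t. 0 < F t" "mono F \<or> antimono F" "continuous_on UNIV F"
    "\<And>t. t \<in> {-1..1} \<Longrightarrow> F t = f t"
proof
  define c where "c t = max (-1) (min 1 t)" for t :: real
  have c_in: "c t \<in> {-1..1}" for t by (simp add: c_def)
  have c_mono: "s \<le> t \<Longrightarrow> c s \<le> c t" for s t by (simp add: c_def)
  show "0 < f (c t)" for t using pos c_in by blast
  show "f (c t) = f t" if "t \<in> {-1..1}" for t using that by (simp add: c_def)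
  show "continuous_on UNIV (\<lambda>t. f (c t))"
    by (rule continuous_on_compose2[OF cont]) (auto simp: c_def intro!: continuous_intros)
  show "mono (\<lambda>t. f (c t)) \<or> antimono (\<lambda>t. f (c t))"
    using mono
  proof
    assume f_mono: "mono_on {-1..1} f"
    have "mono (\<lambda>t. f (c t))"
      by (rule monoI) (rule mono_onD[OF f_mono c_in c_in c_mono])
    then show ?thesis ..
  next
    assume f_antimono: "antimono_on {-1..1} f"
    have "antimono (\<lambda>t. f (c t))"
      by (rule antimonoI) (rule monotone_onD[OF f_antimono c_in c_in c_mono])
    then show ?thesis ..
  qed
qed

theorem lemma5:
  fixes f :: "real \<Rightarrow> real" and lam :: real and y w :: "'a::euclidean_space"
  assumes f_pos: "\<forall>t\<in>{-1..1}. f t > 0"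
    and f_mono: "mono_on {-1..1} f \<or> antimono_on {-1..1} f"
    and f_cont: "continuous_on {-1..1} f"
    and markov: "markov_zonal TYPE('a) f"
    and lam_lin: "\<forall>e::'a. \<forall>x\<in>sphere 0 1. kernel_op f (\<lambda>z. z \<bullet> e) x = lam * (x \<bullet> e)"
    and lam_pos: "lam > 0"
    and lam_max: "\<forall>k\<ge>1. \<forall>g::'a \<Rightarrow> real. \<forall>c.
                    spherical_harmonic k g \<and> (\<exists>x\<in>sphere 0 1. g x \<noteq> 0)
                    \<and> (\<forall>x\<in>sphere 0 1. kernel_op f g x = c * g x) \<longrightarrow> \<bar>c\<bar> \<le> lam"
    and y: "y \<in> sphere 0 1"
    and w: "w \<in> sphere 0 1"
  shows "let \<mu> = density sphere_unif (\<lambda>x. ennreal (f (x \<bullet> y)));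
             p = min (measure \<mu> (halfspace_pos w)) (measure \<mu> (halfspace_neg w))
         in DPS w (2 * p) \<mu>"
proof -
  let ?\<sigma> = "sphere_unif :: 'a measure"
  obtain F where F_pos: "\<And>t. 0 < F t" and F_mono: "mono F \<or> antimono F"
    and F_cont: "continuous_on UNIV F" and F_eq: "\<And>t. t \<in> {-1..1} \<Longrightarrow> F t = f t"
    using clamped_extension[OF f_pos f_mono f_cont] by blast
  have F_meas: "(\<lambda>x. F (x \<bullet> y)) \<in> borel_measurable borel"
    by (intro borel_measurable_continuous_onI continuous_on_compose2[OF F_cont])
       (auto intro: continuous_intros)
  have f_total: "(\<integral>x. f (y \<bullet> x) \<partial>?\<sigma>) = 1"
    using markov y unfolding markov_zonal_def by blast
  then have "integrable ?\<sigma> (\<lambda>x. f (y \<bullet> x))"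
    using not_integrable_integral_eq by fastforce
  then have f_meas: "(\<lambda>x. f (x \<bullet> y)) \<in> borel_measurable borel"
    using borel_measurable_integrable by (fastforce simp: inner_commute)
  have F_ae: "AE x in ?\<sigma>. F (x \<bullet> y) = f (x \<bullet> y)"
    using AE_sphere_unif_sphere
  proof (rule eventually_mono)
    show "F (x \<bullet> y) = f (x \<bullet> y)" if "x \<in> sphere 0 1" for x
      using Cauchy_Schwarz_ineq2[of x y] that y by (intro F_eq) (simp add: abs_le_iff)
  qed
  then have "density ?\<sigma> (\<lambda>x. ennreal (f (x \<bullet> y))) = density ?\<sigma> (\<lambda>x. ennreal (F (x \<bullet> y)))"
    using F_meas f_meas by (auto intro!: density_cong elim: eventually_mono)
  moreover have "(\<integral>x. F (x \<bullet> y) \<partial>?\<sigma>) = (\<integral>x. f (x \<bullet> y) \<partial>?\<sigma>)"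
    using F_ae F_meas f_meas by (intro integral_cong_AE) simp_all
  ultimately show ?thesis
    using DPS_zonal_density[OF less_imp_le[OF F_pos] F_mono, of y w] w f_total
    by (simp add: Let_def inner_commute)
qed

end
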